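(* Let $\sigma,\widehat\sigma\in\Omega$ be such that the transition probability $\mathbb P(\widehat\sigma\to\sigma)$ in the auxiliary TASEP is positive. Then for each $\mu\in S_\lambda$, \[\sum_{\widehat\mu\in S_\lambda}\mathbb P\big((\widehat\mu,\widehat\sigma)\to(\mu,\sigma)\big)\,F_{\widehat\mu}(\widehat\sigma\boldsymbol\chi;t)=F_\mu(\sigma\boldsymbol\chi;t)\,\mathbb P(\widehat\sigma\to\sigma),\] where the transition probabilities on the left are those of $\blacktriangle\mathrm{ASEP}_\lambda$.
   Context: ASEP polynomials: $\lambda=(\lambda_1\le\cdots\le\lambda_n)$ nonnegative integers, $S_\lambda$ its rearrangements; $wy=(y_{w^{-1}(1)},\dots,y_{w^{-1}(n)})$ for $w\in\mathfrak S_n$, $(wf)(\mathbf x)=f(w\mathbf x)$; indices mod $n$; $\overline s_i$ ($i\in\mathbb Z/n\mathbb Z$) the transposition of $i,i+1$; $c=(1\,2\cdots n)$; $T_i=t-\frac{tx_i-x_{i+1}}{x_i-x_{i+1}}(1-\overline s_i)$. $(F_\mu(\mathbf x;t))_{\mu\in S_\lambda}$ is the unique family of homogeneous polynomials in $\mathbb C(t)[\mathbf x]$ with coefficient of $x_1^{\lambda_n-\lambda_1}\cdots x_n^{\lambda_n-\lambda_n}$ in $F_\lambda$ equal to $1$ and: $T_iF_\mu=F_{\overline s_i\mu}$ if $\mu_i<\mu_{i+1}$; $\overline s_iF_\mu=F_\mu$ if $\mu_i=\mu_{i+1}$; $cF_{c\mu}=F_\mu$. $\mathfrak f_r(k,k')=1$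 if $k>k'$, $r$ if $k<k'$, $0$ if $k=k'$. Stoned multispecies ASEP: $t\in[0,1)$; stones $\blacktriangle_1,\dots,\blacktriangle_n$, surjective densities $\varrho:\{\blacktriangle_j\}\to[m]$ ($m\ge2$) with $1=\varrho(\blacktriangle_1)\le\cdots\le\varrho(\blacktriangle_n)=m$. $\Omega$: the $\sigma\in\mathfrak S_n$ such that, for each density $k$, stones of density $k$ occur in the same cyclic order in $\blacktriangle_{\sigma^{-1}(1)},\dots,\blacktriangle_{\sigma^{-1}(n)}$ as in $\blacktriangle_1,\dots,\blacktriangle_n$. $\mathfrak K(\sigma)=\#\{i:\varrho(\blacktriangle_{\sigma^{-1}(i)})<\varrho(\blacktriangle_{\sigma^{-1}(i+1)})\}$. Auxiliary TASEP on $\Omega$: $\mathbb P(\sigma\to\overline s_i\sigma)=1/n$ if $\varrho(\blacktriangle_{\sigma^{-1}(i)})<\varrho(\blacktriangle_{\sigma^{-1}(i+1)})$, $\mathbb P(\sigma\to\sigma)=1-\mathfrak K(\sigma)/n$, others $0$. $\boldsymbol\chi=(\chi_1,\dots,\chi_n)$ nonzero reals with $p(j,j'):=\frac{\chi_j-\chi_{j'}}{t\chi_j-\chi_{j'}}\in[0,1)$ whenever $\varrho(\blacktriangle_j)<\varrho(\blacktriangle_{j'})$. $\blacktriangle\mathrm{ASEP}_\lambda$ on $S_\lambda\times\Omega$: if $\varrho(\blacktriangle_{\sigma^{-1}(i)})<\varrho(\blacktriangle_{\sigma^{-1}(i+1)})$ and $\mu_i\ne\mu_{i+1}$, then $\mathbb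 P((\mu,\sigma)\to(\overline s_i\mu,\overline s_i\sigma))=\frac1np(\sigma^{-1}(i),\sigma^{-1}(i+1))\mathfrak f_t(\mu_i,\mu_{i+1})$ and $\mathbb P((\mu,\sigma)\to(\mu,\overline s_i\sigma))=\frac1n[1-p(\sigma^{-1}(i),\sigma^{-1}(i+1))\mathfrak f_t(\mu_i,\mu_{i+1})]$; if the density condition holds and $\mu_i=\mu_{i+1}$, $\mathbb P((\mu,\sigma)\to(\mu,\overline s_i\sigma))=\frac1n$; $\mathbb P((\mu,\sigma)\to(\mu,\sigma))=1-\mathfrak K(\sigma)/n$; all others $0$. *)

theory Defs
  imports Complex_Main "HOL-Library.Poly_Mapping" "HOL-Computational_Algebra.Fraction_Field"
    "HOL-Computational_Algebra.Polynomial" "HOL-Combinatorics.Permutations"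
    "HOL-Combinatorics.Transposition" "HOL-Library.Multiset"
begin

section \<open>Positions, permutations, rearrangements (0-based: positions 0..n-1, indices mod n)\<close>

definition nxt :: "nat \<Rightarrow> nat \<Rightarrow> nat" where
  "nxt n i = Suc i mod n"

definition sbar :: "nat \<Rightarrow> nat \<Rightarrow> nat \<Rightarrow> nat" where
  "sbar n i = transpose i (nxt n i)"

definition cyc :: "nat \<Rightarrow> nat \<Rightarrow> nat" where
  "cyc n k = (if k < n then Suc k mod n else k)"

definition act_list :: "nat \<Rightarrow> (nat \<Rightarrow> nat) \<Rightarrow> 'a list \<Rightarrow> 'a list" where
  "act_list n w y = map (\<lambda>k. y ! inv w k) [0..<n]"

definition act_vec :: "(nat \<Rightarrow> nat) \<Rightarrow> (nat \<Rightarrow> 'a) \<Rightarrow> (nat \<Rightarrow> 'a)" where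
  "act_vec w y = (\<lambda>k. y (inv w k))"

definition rearrangements :: "nat list \<Rightarrow> nat list set" where
  "rearrangements lam = {mu. mset mu = mset lam}"

type_synonym ratfun = "complex poly fract"
type_synonym mpoly = "(nat \<Rightarrow>\<^sub>0 nat) \<Rightarrow>\<^sub>0 ratfun"

definition Var :: "nat \<Rightarrow> mpoly" where
  "Var i = Poly_Mapping.single (Poly_Mapping.single i 1) 1"

definition Const :: "ratfun \<Rightarrow> mpoly" where
  "Const a = Poly_Mapping.single 0 a"

definition tfr :: ratfun where
  "tfr = Fraction_Field.Fract [:0, 1:] 1"

definition tot_deg :: "(nat \<Rightarrow>\<^sub>0 nat) \<Rightarrow> nat" where
  "tot_deg a = (\<Sum>k\<in>Poly_Mapping.keys a. Poly_Mapping.lookup a k)"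

definition in_vars :: "nat \<Rightarrow> mpoly \<Rightarrow> bool" where
  "in_vars n f \<longleftrightarrow> (\<forall>a\<in>Poly_Mapping.keys f. Poly_Mapping.keys a \<subseteq> {..<n})"

definition homogeneous :: "mpoly \<Rightarrow> bool" where
  "homogeneous f \<longleftrightarrow> (\<exists>d. \<forall>a\<in>Poly_Mapping.keys f. tot_deg a = d)"

definition subst_mon :: "(nat \<Rightarrow> nat) \<Rightarrow> (nat \<Rightarrow>\<^sub>0 nat) \<Rightarrow> (nat \<Rightarrow>\<^sub>0 nat)" where
  "subst_mon g a = (\<Sum>k\<in>Poly_Mapping.keys a. Poly_Mapping.single (g k) (Poly_Mapping.lookup a k))"

definition subst_poly :: "(nat \<Rightarrow> nat) \<Rightarrow> mpoly \<Rightarrow> mpoly" where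
  "subst_poly g f = (\<Sum>a\<in>Poly_Mapping.keys f. Poly_Mapping.single (subst_mon g a) (Poly_Mapping.lookup f a))"

text \<open>(w f)(x) = f(w x), where (w x)_k = x_(w^-1 k): substitute x_k := x_(w^-1 k).\<close>
definition act_poly :: "(nat \<Rightarrow> nat) \<Rightarrow> mpoly \<Rightarrow> mpoly" where
  "act_poly w f = subst_poly (inv w) f"

text \<open>T_i f = g, written without division:
  (x_i - x_(i+1)) (g - t f) = - (t x_i - x_(i+1)) (f - sbar_i f).
  Since C(t)[x] is an integral domain this determines g uniquely.\<close>
definition T_rel :: "nat \<Rightarrow> nat \<Rightarrow> mpoly \<Rightarrow> mpoly \<Rightarrow> bool" where
  "T_rel n i f g \<longleftrightarrow>
     (Var i - Var (nxt n i)) * (g - Const tfr * f)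
       = - ((Const tfr * Var i - Var (nxt n i)) * (f - act_poly (sbar n i) f))"

definition lead_mon :: "nat list \<Rightarrow> (nat \<Rightarrow>\<^sub>0 nat)" where
  "lead_mon lam = (\<Sum>k<length lam. Poly_Mapping.single k (lam ! (length lam - 1) - lam ! k))"

definition is_ASEP_family :: "nat list \<Rightarrow> (nat list \<Rightarrow> mpoly) \<Rightarrow> bool" where
  "is_ASEP_family lam F \<longleftrightarrow>
     (let n = length lam in
      (\<forall>mu\<in>rearrangements lam. in_vars n (F mu) \<and> homogeneous (F mu)) \<and>
      Poly_Mapping.lookup (F lam) (lead_mon lam) = 1 \<and>
      (\<forall>mu\<in>rearrangements lam. \<forall>i<n.
          mu ! i < mu ! nxt n i \<longrightarrow> T_rel n i (F mu) (F (act_list n (sbar n i) mu))) \<and>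
      (\<forall>mu\<in>rearrangements lam. \<forall>i<n.
          mu ! i = mu ! nxt n i \<longrightarrow> act_poly (sbar n i) (F mu) = F mu) \<and>
      (\<forall>mu\<in>rearrangements lam. act_poly (cyc n) (F (act_list n (cyc n) mu)) = F mu))"

definition fract_regular :: "complex \<Rightarrow> ratfun \<Rightarrow> bool" where
  "fract_regular t0 r \<longleftrightarrow> (\<exists>p q. r = Fraction_Field.Fract p q \<and> poly q t0 \<noteq> 0)"

definition fract_eval :: "complex \<Rightarrow> ratfun \<Rightarrow> complex" where
  "fract_eval t0 r = (THE v. \<exists>p q. r = Fraction_Field.Fract p q \<and> poly q t0 \<noteq> 0 \<and> v = poly p t0 / poly q t0)"

definition eval_poly :: "real \<Rightarrow> (nat \<Rightarrow> real) \<Rightarrow> mpoly \<Rightarrow> complex" where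
  "eval_poly t0 y f =
     (\<Sum>a\<in>Poly_Mapping.keys f. fract_eval (of_real t0) (Poly_Mapping.lookup f a) *
                    (\<Prod>k\<in>Poly_Mapping.keys a. of_real (y k) ^ Poly_Mapping.lookup a k))"

definition stone_densities :: "nat \<Rightarrow> nat \<Rightarrow> (nat \<Rightarrow> nat) \<Rightarrow> bool" where
  "stone_densities n m rho \<longleftrightarrow> 2 \<le> m \<and> 0 < n \<and>
     (\<forall>j k. j \<le> k \<longrightarrow> k < n \<longrightarrow> rho j \<le> rho k) \<and>
     rho 0 = 1 \<and> rho (n - 1) = m \<and> rho ` {..<n} = {1..m}"

definition Omega :: "nat \<Rightarrow> (nat \<Rightarrow> nat) \<Rightarrow> (nat \<Rightarrow> nat) set" where
  "Omega n rho = {sigma. sigma permutes {..<n} \<and>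
     (\<forall>k. \<exists>r. rotate r (filter (\<lambda>j. rho j = k) [0..<n])
                 = filter (\<lambda>j. rho j = k) (map (inv sigma) [0..<n]))}"

definition dens_up :: "nat \<Rightarrow> (nat \<Rightarrow> nat) \<Rightarrow> (nat \<Rightarrow> nat) \<Rightarrow> nat \<Rightarrow> bool" where
  "dens_up n rho sigma i \<longleftrightarrow> rho (inv sigma i) < rho (inv sigma (nxt n i))"

definition Kcount :: "nat \<Rightarrow> (nat \<Rightarrow> nat) \<Rightarrow> (nat \<Rightarrow> nat) \<Rightarrow> nat" where
  "Kcount n rho sigma = card {i. i < n \<and> dens_up n rho sigma i}"

text \<open>Auxiliary TASEP: P(sh -> s).  The targets sbar_i sh for distinct admissible i are
  distinct and differ from sh, so summing over i gives exactly the stated kernel.\<close>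
definition P_tasep :: "nat \<Rightarrow> (nat \<Rightarrow> nat) \<Rightarrow> (nat \<Rightarrow> nat) \<Rightarrow> (nat \<Rightarrow> nat) \<Rightarrow> real" where
  "P_tasep n rho sh s =
     (if s = sh then 1 - real (Kcount n rho sh) / real n else 0) +
     (\<Sum>i\<in>{i. i < n \<and> dens_up n rho sh i}. if s = sbar n i \<circ> sh then 1 / real n else 0)"

definition frate :: "real \<Rightarrow> nat \<Rightarrow> nat \<Rightarrow> real" where
  "frate r k k' = (if k > k' then 1 else if k < k' then r else 0)"

definition pswap :: "real \<Rightarrow> (nat \<Rightarrow> real) \<Rightarrow> nat \<Rightarrow> nat \<Rightarrow> real" where
  "pswap t chi j j' = (chi j - chi j') / (t * chi j - chi j')"

definition P_sasep :: "nat \<Rightarrow> (nat \<Rightarrow> nat) \<Rightarrow> real \<Rightarrow> (nat \<Rightarrow> real) \<Rightarrow>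
    nat list \<Rightarrow> (nat \<Rightarrow> nat) \<Rightarrow> nat list \<Rightarrow> (nat \<Rightarrow> nat) \<Rightarrow> real" where
  "P_sasep n rho t chi muh sh mu s =
     (if mu = muh \<and> s = sh then 1 - real (Kcount n rho sh) / real n else 0) +
     (\<Sum>i\<in>{i. i < n \<and> dens_up n rho sh i}.
        (let pf = pswap t chi (inv sh i) (inv sh (nxt n i)) * frate t (muh ! i) (muh ! nxt n i)
         in if muh ! i \<noteq> muh ! nxt n i then
              (if mu = act_list n (sbar n i) muh \<and> s = sbar n i \<circ> sh then pf / real n else 0) +
              (if mu = muh \<and> s = sbar n i \<circ> sh then (1 - pf) / real n else 0)
            else (if mu = muh \<and> s = sbar n i \<circ> sh then 1 / real n else 0)))"

end

theory Submission
  imports Defs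
begin

text \<open>
  A positive auxiliary transition from sigmah to sigma either keeps sigmah, and then both sides
  are the holding probability times F mu at sigmah chi, or applies the swap s_i at a density
  ascent of sigmah. In the second case only muh = mu and muh = s_i mu contribute, and with
  y = sigmah chi the claim becomes
    (1 - p f(mu_i, mu_(i+1))) F_mu(y) + p f(mu_(i+1), mu_i) F_(s_i mu)(y) = F_mu(s_i y).
  The swap probability p = (y_i - y_(i+1)) / (t y_i - y_(i+1)) is the coefficient of T_i at y,
  so for an ascent of mu this is the exchange relation T_i F_mu = F_(s_i mu) evaluated at y;
  for a descent it is the relation T_i F_(s_i mu) = F_mu evaluated at y and at s_i y, with
  F_(s_i mu)(s_i y) eliminated; for mu_i = mu_(i+1) it is the s_i-symmetry of F_mu.
\<close>

section \<open>Evaluating rational functions of \<open>t\<close>\<close>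

lemma fract_eval_Fract:
  assumes "poly q c \<noteq> 0"
  shows "fract_eval c (Fraction_Field.Fract p q) = poly p c / poly q c"
  unfolding fract_eval_def
proof (rule the_equality)
  fix v
  assume "\<exists>p' q'. Fraction_Field.Fract p q = Fraction_Field.Fract p' q' \<and> poly q' c \<noteq> 0
                  \<and> v = poly p' c / poly q' c"
  then obtain p' q' where eq: "Fraction_Field.Fract p q = Fraction_Field.Fract p' q'"
    and q': "poly q' c \<noteq> 0" and v: "v = poly p' c / poly q' c"
    by blast
  from assms q' have "q \<noteq> 0" "q' \<noteq> 0" by auto
  with eq have "p * q' = p' * q" by (simp add: eq_fract)
  then have "poly p c * poly q' c = poly p' c * poly q c" by (metis poly_mult)
  with assms q' show "v = poly p c / poly q c" by (simp add: v field_simps)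
qed (use assms in blast)

lemma fract_regular_Fract: "poly q c \<noteq> 0 \<Longrightarrow> fract_regular c (Fraction_Field.Fract p q)"
  unfolding fract_regular_def by blast

lemma fract_regularE:
  assumes "fract_regular c r"
  obtains p q where "r = Fraction_Field.Fract p q" "poly q c \<noteq> 0"
  using assms unfolding fract_regular_def by blast

lemma fract_regular_add_eval:
  assumes "fract_regular c r" "fract_regular c s"
  shows "fract_regular c (r + s) \<and> fract_eval c (r + s) = fract_eval c r + fract_eval c s"
proof -
  obtain p q p' q' where r: "r = Fraction_Field.Fract p q" "poly q c \<noteq> 0"
    and s: "s = Fraction_Field.Fract p' q'" "poly q' c \<noteq> 0"
    using assms by (metis fract_regularE)
  from r s have "q \<noteq> 0" "q' \<noteq> 0" by auto
  then have "r + s = Fraction_Field.Fract (p * q' + p' * q) (q * q')" using r s by simp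
  with r s show ?thesis by (simp add: fract_regular_Fract fract_eval_Fract field_simps)
qed

lemma fract_regular_mult_eval:
  assumes "fract_regular c r" "fract_regular c s"
  shows "fract_regular c (r * s) \<and> fract_eval c (r * s) = fract_eval c r * fract_eval c s"
proof -
  obtain p q p' q' where r: "r = Fraction_Field.Fract p q" "poly q c \<noteq> 0"
    and s: "s = Fraction_Field.Fract p' q'" "poly q' c \<noteq> 0"
    using assms by (metis fract_regularE)
  then have "r * s = Fraction_Field.Fract (p * p') (q * q')" by simp
  with r s show ?thesis by (simp add: fract_regular_Fract fract_eval_Fract)
qed

lemma fract_regular_uminus_eval:
  assumes "fract_regular c r"
  shows "fract_regular c (- r) \<and> fract_eval c (- r) = - fract_eval c r"
proof -
  obtain p q where r: "r = Fraction_Field.Fract p q" "poly q c \<noteq> 0"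
    using assms by (metis fract_regularE)
  then have "- r = Fraction_Field.Fract (- p) q" by simp
  with r show ?thesis by (simp add: fract_regular_Fract fract_eval_Fract)
qed

lemma fract_regular_of_poly_eval:
  "fract_regular c (Fraction_Field.Fract p 1) \<and> fract_eval c (Fraction_Field.Fract p 1) = poly p c"
  by (simp add: fract_regular_Fract fract_eval_Fract)

lemma fract_regular_zero_eval: "fract_regular c 0 \<and> fract_eval c 0 = 0"
  using fract_regular_of_poly_eval[of c 0] by (simp add: Zero_fract_def)

lemma fract_regular_one_eval: "fract_regular c 1 \<and> fract_eval c 1 = 1"
  using fract_regular_of_poly_eval[of c 1] by (simp add: One_fract_def)

lemma fract_regular_tfr_eval: "fract_regular c tfr \<and> fract_eval c tfr = c"
  using fract_regular_of_poly_eval[of c "[:0, 1:]"] by (simp add: tfr_def)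

section \<open>Evaluating polynomials\<close>

definition mon_val :: "(nat \<Rightarrow> real) \<Rightarrow> (nat \<Rightarrow>\<^sub>0 nat) \<Rightarrow> complex" where
  "mon_val y a = (\<Prod>k\<in>Poly_Mapping.keys a. of_real (y k) ^ Poly_Mapping.lookup a k)"

definition coeffs_regular :: "complex \<Rightarrow> mpoly \<Rightarrow> bool" where
  "coeffs_regular c f \<longleftrightarrow> (\<forall>a. fract_regular c (Poly_Mapping.lookup f a))"

lemma mon_val_superset:
  assumes "finite S" "Poly_Mapping.keys a \<subseteq> S"
  shows "mon_val y a = (\<Prod>k\<in>S. of_real (y k) ^ Poly_Mapping.lookup a k)"
  unfolding mon_val_def
  by (rule prod.mono_neutral_left) (use assms in \<open>auto simp: in_keys_iff\<close>)

lemma mon_val_add: "mon_val y (a + b) = mon_val y a * mon_val y b"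
proof -
  let ?S = "Poly_Mapping.keys a \<union> Poly_Mapping.keys b"
  have "mon_val y (a + b) = (\<Prod>k\<in>?S. of_real (y k) ^ Poly_Mapping.lookup (a + b) k)"
    by (rule mon_val_superset) (use keys_add[of a b] in auto)
  also have "\<dots> = (\<Prod>k\<in>?S. of_real (y k) ^ Poly_Mapping.lookup a k * of_real (y k) ^ Poly_Mapping.lookup b k)"
    by (simp add: lookup_add power_add)
  also have "\<dots> = mon_val y a * mon_val y b"
    by (simp add: prod.distrib mon_val_superset[of ?S])
  finally show ?thesis .
qed

lemma mon_val_zero [simp]: "mon_val y 0 = 1"
  by (simp add: mon_val_def)

lemma mon_val_single [simp]: "mon_val y (Poly_Mapping.single k e) = of_real (y k) ^ e"
  by (simp add: mon_val_def)

lemma mon_val_sum: "finite A \<Longrightarrow> mon_val y (\<Sum>x\<in>A. h x) = (\<Prod>x\<in>A. mon_val y (h x))"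
  by (induction A rule: finite_induct) (auto simp: mon_val_add)

lemma mon_val_subst_mon: "mon_val y (subst_mon g a) = mon_val (y \<circ> g) a"
proof -
  have "mon_val y (subst_mon g a)
      = (\<Prod>k\<in>Poly_Mapping.keys a. mon_val y (Poly_Mapping.single (g k) (Poly_Mapping.lookup a k)))"
    unfolding subst_mon_def by (rule mon_val_sum) simp
  then show ?thesis by (simp only: mon_val_single) (simp add: mon_val_def)
qed

lemma eval_poly_superset:
  assumes "finite S" "Poly_Mapping.keys f \<subseteq> S"
  shows "eval_poly t0 y f = (\<Sum>a\<in>S. fract_eval (of_real t0) (Poly_Mapping.lookup f a) * mon_val y a)"
  unfolding eval_poly_def mon_val_def[symmetric]
  by (rule sum.mono_neutral_left) (use assms in \<open>auto simp: in_keys_iff fract_regular_zero_eval\<close>)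

lemma poly_mapping_sum_single: "f = (\<Sum>a\<in>Poly_Mapping.keys f. Poly_Mapping.single a (Poly_Mapping.lookup f a))"
  by (rule poly_mapping_eqI) (simp add: lookup_sum lookup_single when_def in_keys_iff)

lemma coeffs_regular_add_eval:
  assumes "coeffs_regular (of_real t0) f" "coeffs_regular (of_real t0) g"
  shows "coeffs_regular (of_real t0) (f + g)
       \<and> eval_poly t0 y (f + g) = eval_poly t0 y f + eval_poly t0 y g"
proof
  show "coeffs_regular (of_real t0) (f + g)"
    using assms fract_regular_add_eval by (simp add: coeffs_regular_def lookup_add)
  let ?S = "Poly_Mapping.keys f \<union> Poly_Mapping.keys g"
  have "eval_poly t0 y (f + g)
      = (\<Sum>a\<in>?S. fract_eval (of_real t0) (Poly_Mapping.lookup (f + g) a) * mon_val y a)"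
    by (rule eval_poly_superset) (use keys_add[of f g] in auto)
  also have "\<dots> = (\<Sum>a\<in>?S. fract_eval (of_real t0) (Poly_Mapping.lookup f a) * mon_val y a
                    + fract_eval (of_real t0) (Poly_Mapping.lookup g a) * mon_val y a)"
    using assms fract_regular_add_eval by (simp add: coeffs_regular_def lookup_add distrib_right)
  also have "\<dots> = eval_poly t0 y f + eval_poly t0 y g"
    by (simp add: sum.distrib eval_poly_superset[of ?S])
  finally show "eval_poly t0 y (f + g) = eval_poly t0 y f + eval_poly t0 y g" .
qed

lemma coeffs_regular_uminus_eval:
  assumes "coeffs_regular (of_real t0) f"
  shows "coeffs_regular (of_real t0) (- f) \<and> eval_poly t0 y (- f) = - eval_poly t0 y f"
proof
  show "coeffs_regular (of_real t0) (- f)"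
    using assms fract_regular_uminus_eval by (simp add: coeffs_regular_def)
  have "eval_poly t0 y (- f)
      = (\<Sum>a\<in>Poly_Mapping.keys f. fract_eval (of_real t0) (Poly_Mapping.lookup (- f) a) * mon_val y a)"
    by (rule eval_poly_superset) (auto simp: in_keys_iff)
  also have "\<dots> = - eval_poly t0 y f"
    using assms fract_regular_uminus_eval
    by (simp add: coeffs_regular_def eval_poly_superset[of "Poly_Mapping.keys f"] sum_negf)
  finally show "eval_poly t0 y (- f) = - eval_poly t0 y f" .
qed

lemma coeffs_regular_diff_eval:
  assumes "coeffs_regular (of_real t0) f" "coeffs_regular (of_real t0) g"
  shows "coeffs_regular (of_real t0) (f - g)
       \<and> eval_poly t0 y (f - g) = eval_poly t0 y f - eval_poly t0 y g"
  using coeffs_regular_add_eval[OF assms(1) coeffs_regular_uminus_eval[OF assms(2), THEN conjunct1]]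
    coeffs_regular_uminus_eval[OF assms(2)]
  by simp

lemma coeffs_regular_sum_eval:
  assumes "finite A" "\<forall>x\<in>A. coeffs_regular (of_real t0) (h x)"
  shows "coeffs_regular (of_real t0) (\<Sum>x\<in>A. h x)
       \<and> eval_poly t0 y (\<Sum>x\<in>A. h x) = (\<Sum>x\<in>A. eval_poly t0 y (h x))"
  using assms
proof (induction A rule: finite_induct)
  case empty
  then show ?case using fract_regular_zero_eval by (simp add: coeffs_regular_def eval_poly_def)
next
  case (insert x A)
  then show ?case using coeffs_regular_add_eval[of t0 "h x" "sum h A" y] by simp
qed

lemma coeffs_regular_single_eval:
  assumes "fract_regular (of_real t0) v"
  shows "coeffs_regular (of_real t0) (Poly_Mapping.single a v)
       \<and> eval_poly t0 y (Poly_Mapping.single a v) = fract_eval (of_real t0) v * mon_val y a"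
proof
  show "coeffs_regular (of_real t0) (Poly_Mapping.single a v)"
    using assms fract_regular_zero_eval by (simp add: coeffs_regular_def lookup_single when_def)
  show "eval_poly t0 y (Poly_Mapping.single a v) = fract_eval (of_real t0) v * mon_val y a"
    by (subst eval_poly_superset[of "{a}"]) auto
qed

lemma coeffs_regular_mult_eval:
  assumes f: "coeffs_regular (of_real t0) f" and g: "coeffs_regular (of_real t0) g"
  shows "coeffs_regular (of_real t0) (f * g)
       \<and> eval_poly t0 y (f * g) = eval_poly t0 y f * eval_poly t0 y g"
proof -
  let ?c = "of_real t0 :: complex"
  define summand where
    "summand a b = Poly_Mapping.single (a + b) (Poly_Mapping.lookup f a * Poly_Mapping.lookup g b)" for a b
  have "f * g = (\<Sum>a\<in>Poly_Mapping.keys f. Poly_Mapping.single a (Poly_Mapping.lookup f a)) *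
                (\<Sum>b\<in>Poly_Mapping.keys g. Poly_Mapping.single b (Poly_Mapping.lookup g b))"
    using poly_mapping_sum_single[of f] poly_mapping_sum_single[of g] by simp
  then have expand: "f * g = (\<Sum>a\<in>Poly_Mapping.keys f. \<Sum>b\<in>Poly_Mapping.keys g. summand a b)"
    by (simp add: sum_product mult_single summand_def)
  have summand: "coeffs_regular ?c (summand a b) \<and> eval_poly t0 y (summand a b)
      = (fract_eval ?c (Poly_Mapping.lookup f a) * mon_val y a)
        * (fract_eval ?c (Poly_Mapping.lookup g b) * mon_val y b)" for a b
    using f g fract_regular_mult_eval coeffs_regular_single_eval
    by (simp add: summand_def coeffs_regular_def mon_val_add)
  have inner: "coeffs_regular ?c (\<Sum>b\<in>Poly_Mapping.keys g. summand a b)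
      \<and> eval_poly t0 y (\<Sum>b\<in>Poly_Mapping.keys g. summand a b)
        = (fract_eval ?c (Poly_Mapping.lookup f a) * mon_val y a) * eval_poly t0 y g" for a
    using coeffs_regular_sum_eval[of "Poly_Mapping.keys g" t0 "summand a" y] summand
    by (simp add: eval_poly_def mon_val_def sum_distrib_left)
  show ?thesis
    unfolding expand using coeffs_regular_sum_eval[of "Poly_Mapping.keys f" t0 _ y] inner
    by (simp add: eval_poly_def mon_val_def sum_distrib_right)
qed

lemma coeffs_regular_Var_eval:
  "coeffs_regular (of_real t0) (Var i) \<and> eval_poly t0 y (Var i) = of_real (y i)"
  unfolding Var_def
  using coeffs_regular_single_eval[of t0 1 "Poly_Mapping.single i 1" y] fract_regular_one_eval
  by simp

lemma coeffs_regular_Const_eval: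
  "fract_regular (of_real t0) v \<Longrightarrow>
   coeffs_regular (of_real t0) (Const v) \<and> eval_poly t0 y (Const v) = fract_eval (of_real t0) v"
  unfolding Const_def using coeffs_regular_single_eval[of t0 v 0 y] by simp

lemma coeffs_regular_subst_eval:
  assumes f: "coeffs_regular (of_real t0) f"
  shows "coeffs_regular (of_real t0) (subst_poly g f)
       \<and> eval_poly t0 y (subst_poly g f) = eval_poly t0 (y \<circ> g) f"
proof -
  let ?summand = "\<lambda>a. Poly_Mapping.single (subst_mon g a) (Poly_Mapping.lookup f a)"
  have "\<forall>a\<in>Poly_Mapping.keys f. coeffs_regular (of_real t0) (?summand a) \<and> eval_poly t0 y (?summand a)
      = fract_eval (of_real t0) (Poly_Mapping.lookup f a) * mon_val (y \<circ> g) a"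
    using coeffs_regular_single_eval f mon_val_subst_mon unfolding coeffs_regular_def by metis
  then show ?thesis
    unfolding subst_poly_def using coeffs_regular_sum_eval[of "Poly_Mapping.keys f" t0 ?summand y]
    by (simp add: eval_poly_def mon_val_def)
qed

lemma coeffs_regular_act_eval:
  assumes "coeffs_regular (of_real t0) f"
  shows "coeffs_regular (of_real t0) (act_poly w f)
       \<and> eval_poly t0 y (act_poly w f) = eval_poly t0 (act_vec w y) f"
proof -
  have "y \<circ> inv w = act_vec w y" by (simp add: act_vec_def fun_eq_iff)
  then show ?thesis
    unfolding act_poly_def using coeffs_regular_subst_eval[OF assms, of "inv w" y] by simp
qed

section \<open>Transpositions acting on words and vectors\<close>

lemma nxt_less: "i < n \<Longrightarrow> nxt n i < n"
  unfolding nxt_def by simp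

lemma sbar_permutes: "i < n \<Longrightarrow> sbar n i permutes {..<n}"
  unfolding sbar_def by (rule permutes_swap_id) (auto simp: nxt_less)

lemma inv_sbar [simp]: "inv (sbar n i) = sbar n i"
  unfolding sbar_def by simp

lemma sbar_sbar [simp]: "sbar n i (sbar n i x) = x"
  unfolding sbar_def by simp

lemma sbar_apply_first [simp]: "sbar n i i = nxt n i"
  and sbar_apply_second [simp]: "sbar n i (nxt n i) = i"
  unfolding sbar_def by simp_all

lemma length_act_list [simp]: "length (act_list n w mu) = n"
  unfolding act_list_def by simp

lemma act_list_nth: "j < n \<Longrightarrow> act_list n w mu ! j = mu ! inv w j"
  unfolding act_list_def by simp

lemma rearrangements_length: "mu \<in> rearrangements lam \<Longrightarrow> length mu = length lam"
  unfolding rearrangements_def by (auto dest: mset_eq_length)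

lemma finite_rearrangements: "finite (rearrangements lam)"
proof (rule finite_subset)
  show "rearrangements lam \<subseteq> {xs. set xs \<subseteq> set lam \<and> length xs = length lam}"
    unfolding rearrangements_def by (auto dest: mset_eq_setD mset_eq_length)
qed (simp add: finite_lists_length_eq)

lemma act_list_sbar_rearrangements:
  assumes "mu \<in> rearrangements lam" "i < length lam"
  shows "act_list (length lam) (sbar (length lam) i) mu \<in> rearrangements lam"
proof -
  let ?n = "length lam"
  have len: "length mu = ?n" using assms(1) by (rule rearrangements_length)
  then have "act_list ?n (sbar ?n i) mu = permute_list (sbar ?n i) mu"
    unfolding act_list_def permute_list_def by simp
  moreover have "sbar ?n i permutes {..<length mu}" using sbar_permutes[OF assms(2)] len by simp
  ultimately show ?thesis using assms(1) by (simp add: rearrangements_def)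
qed

lemma act_list_sbar_involution:
  assumes "length mu = n" "i < n"
  shows "act_list n (sbar n i) (act_list n (sbar n i) mu) = mu"
proof (rule nth_equalityI)
  fix j assume "j < length (act_list n (sbar n i) (act_list n (sbar n i) mu))"
  then have "j < n" by simp
  moreover have "sbar n i j < n" using permutes_in_image[OF sbar_permutes[OF assms(2)]] \<open>j < n\<close> by simp
  ultimately show "act_list n (sbar n i) (act_list n (sbar n i) mu) ! j = mu ! j"
    by (simp add: act_list_nth)
qed (use assms in simp)

lemma act_list_sbar_nth:
  assumes "i < n"
  shows "act_list n (sbar n i) mu ! i = mu ! nxt n i"
    and "act_list n (sbar n i) mu ! nxt n i = mu ! i"
  using assms by (simp_all add: act_list_nth nxt_less)

lemma act_list_sbar_eq_self:
  assumes "length mu = n" "i < n" "mu ! i = mu ! nxt n i"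
  shows "act_list n (sbar n i) mu = mu"
proof (rule nth_equalityI)
  fix j assume "j < length (act_list n (sbar n i) mu)"
  then show "act_list n (sbar n i) mu ! j = mu ! j"
    using assms by (auto simp: act_list_nth sbar_def transpose_def)
qed (use assms in simp)

lemma act_vec_comp:
  assumes "v permutes S" "w permutes S"
  shows "act_vec (w \<circ> v) y = act_vec w (act_vec v y)"
proof -
  have "inv (w \<circ> v) = inv v \<circ> inv w"
    using assms by (intro o_inv_distrib) (auto dest: permutes_bij)
  then show ?thesis by (simp add: act_vec_def fun_eq_iff)
qed

lemma act_vec_sbar_involution [simp]: "act_vec (sbar n i) (act_vec (sbar n i) y) = y"
  by (simp add: act_vec_def fun_eq_iff)

lemma act_vec_sbar_apply [simp]:
  "act_vec (sbar n i) y i = y (nxt n i)" "act_vec (sbar n i) y (nxt n i) = y i"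
  by (simp_all add: act_vec_def)

lemma act_vec_sbar_eq_self: "y i = y (nxt n i) \<Longrightarrow> act_vec (sbar n i) y = y"
  by (auto simp: act_vec_def sbar_def fun_eq_iff transpose_def)

lemma dens_up_nxt_neq: "dens_up n rho sh i \<Longrightarrow> nxt n i \<noteq> i"
  unfolding dens_up_def by auto

lemma sbar_comp_neq:
  assumes "sh permutes {..<n}" "i < n" "dens_up n rho sh i"
  shows "sh \<noteq> sbar n i \<circ> sh"
proof
  assume "sh = sbar n i \<circ> sh"
  then have "sbar n i (sh (inv sh i)) = sh (inv sh i)" by (metis comp_apply)
  then have "nxt n i = i" using permutes_inverses[OF assms(1)] by simp
  with assms(3) show False by (simp add: dens_up_nxt_neq)
qed

lemma sbar_comp_inj:
  assumes sh: "sh permutes {..<n}" and up: "dens_up n rho sh i" "dens_up n rho sh i'"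
    and eq: "sbar n i' \<circ> sh = sbar n i \<circ> sh"
  shows "i' = i"
proof (rule ccontr)
  assume ne: "i' \<noteq> i"
  have "sbar n i' (sh (inv sh i)) = sbar n i (sh (inv sh i))" using eq by (metis comp_apply)
  then have moved: "sbar n i' i = nxt n i" using permutes_inverses[OF sh] by simp
  have "i = nxt n i'"
  proof (rule ccontr)
    assume "i \<noteq> nxt n i'"
    with ne have "sbar n i' i = i" by (simp add: sbar_def)
    with moved dens_up_nxt_neq[OF up(1)] show False by simp
  qed
  moreover from this moved have "i' = nxt n i" by simp
  ultimately show False using up by (simp add: dens_up_def)
qed

lemma sum_eq_single:
  assumes "finite A" "i \<in> A" "\<And>x. x \<in> A \<Longrightarrow> x \<noteq> i \<Longrightarrow> g x = 0"
  shows "sum g A = g i"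
  using sum.mono_neutral_right[of A "{i}" g] assms by auto

section \<open>The transition kernels\<close>

lemma P_tasep_pos_cases:
  assumes "P_tasep n rho sh s > 0"
  shows "s = sh \<or> (\<exists>i<n. dens_up n rho sh i \<and> s = sbar n i \<circ> sh)"
proof (rule ccontr)
  assume "\<not> ?thesis"
  then have "P_tasep n rho sh s = 0" unfolding P_tasep_def by (auto intro: sum.neutral)
  with assms show False by simp
qed

lemma P_tasep_stay:
  assumes "sh permutes {..<n}"
  shows "P_tasep n rho sh sh = 1 - real (Kcount n rho sh) / real n"
  unfolding P_tasep_def using sbar_comp_neq[OF assms] by (auto intro!: sum.neutral)

lemma P_tasep_step:
  assumes "sh permutes {..<n}" "i < n" "dens_up n rho sh i"
  shows "P_tasep n rho sh (sbar n i \<circ> sh) = 1 / real n"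
proof -
  have "(\<Sum>x\<in>{x. x < n \<and> dens_up n rho sh x}. if sbar n i \<circ> sh = sbar n x \<circ> sh then 1 / real n else 0)
      = 1 / real n"
    by (subst sum_eq_single[of _ i]) (use assms sbar_comp_inj[OF assms(1)] in auto)
  then show ?thesis unfolding P_tasep_def using sbar_comp_neq[OF assms, THEN not_sym] by simp
qed

lemma P_sasep_stay:
  assumes "sh permutes {..<n}"
  shows "P_sasep n rho t chi muh sh mu sh = (if muh = mu then 1 - real (Kcount n rho sh) / real n else 0)"
  unfolding P_sasep_def using sbar_comp_neq[OF assms]
  by (auto intro!: sum.neutral simp: Let_def)

lemma P_sasep_step:
  assumes "sh permutes {..<n}" "i < n" "dens_up n rho sh i"
  shows "P_sasep n rho t chi muh sh mu (sbar n i \<circ> sh) =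
    (let pf = pswap t chi (inv sh i) (inv sh (nxt n i)) * frate t (muh ! i) (muh ! nxt n i)
     in if muh ! i \<noteq> muh ! nxt n i then
          (if mu = act_list n (sbar n i) muh then pf / real n else 0) +
          (if mu = muh then (1 - pf) / real n else 0)
        else (if mu = muh then 1 / real n else 0))"
  unfolding P_sasep_def using sbar_comp_neq[OF assms, THEN not_sym]
  by (subst sum_eq_single[of _ i]) (use assms sbar_comp_inj[OF assms(1)] in \<open>auto simp: Let_def\<close>)

lemma P_sasep_step_swap_form:
  fixes t :: real and chi :: "nat \<Rightarrow> real"
  assumes sh: "sh permutes {..<n}" and i: "i < n" and up: "dens_up n rho sh i"
    and len: "length mu = n" "length muh = n"
  defines "p \<equiv> pswap t chi (inv sh i) (inv sh (nxt n i))"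
  shows "P_sasep n rho t chi muh sh mu (sbar n i \<circ> sh) =
     (if muh = mu then (1 - p * frate t (mu ! i) (mu ! nxt n i)) / real n else 0) +
     (if muh = act_list n (sbar n i) mu then p * frate t (mu ! nxt n i) (mu ! i) / real n else 0)"
proof -
  have swap_iff: "mu = act_list n (sbar n i) muh \<longleftrightarrow> muh = act_list n (sbar n i) mu"
    using act_list_sbar_involution[OF len(1) i] act_list_sbar_involution[OF len(2) i] by metis
  have frate_same: "frate t k k = 0" for k by (simp add: frate_def)
  show ?thesis
    unfolding P_sasep_step[OF sh i up] Let_def swap_iff p_def[symmetric]
    using act_list_sbar_nth[OF i, of mu] act_list_sbar_eq_self[OF len(1) i]
    by (auto simp: frate_same)
qed

section \<open>Local balance at a swap\<close>

lemma eval_T_rel: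
  assumes f: "coeffs_regular (of_real t0) f" and g: "coeffs_regular (of_real t0) g"
    and T: "T_rel n i f g"
  shows "(of_real (y i) - of_real (y (nxt n i))) * (eval_poly t0 y g - of_real t0 * eval_poly t0 y f)
     = - ((of_real t0 * of_real (y i) - of_real (y (nxt n i))) *
          (eval_poly t0 y f - eval_poly t0 (act_vec (sbar n i) y) f))"
proof -
  note V1 = coeffs_regular_Var_eval[of t0 i y]
    and V2 = coeffs_regular_Var_eval[of t0 "nxt n i" y]
    and C = coeffs_regular_Const_eval[OF fract_regular_tfr_eval[THEN conjunct1], of t0 y]
  note Cf = coeffs_regular_mult_eval[OF C[THEN conjunct1] f, of y]
    and A = coeffs_regular_act_eval[OF f, of "sbar n i" y]
  note L1 = coeffs_regular_diff_eval[OF V1[THEN conjunct1] V2[THEN conjunct1], of y]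
    and L2 = coeffs_regular_diff_eval[OF g Cf[THEN conjunct1], of y]
    and CV = coeffs_regular_mult_eval[OF C[THEN conjunct1] V1[THEN conjunct1], of y]
  note L = coeffs_regular_mult_eval[OF L1[THEN conjunct1] L2[THEN conjunct1], of y]
    and R1 = coeffs_regular_diff_eval[OF CV[THEN conjunct1] V2[THEN conjunct1], of y]
    and R2 = coeffs_regular_diff_eval[OF f A[THEN conjunct1], of y]
  note R = coeffs_regular_mult_eval[OF R1[THEN conjunct1] R2[THEN conjunct1], of y]
  note RR = coeffs_regular_uminus_eval[OF R[THEN conjunct1], of y]
  from T have "eval_poly t0 y ((Var i - Var (nxt n i)) * (g - Const tfr * f))
     = eval_poly t0 y (- ((Const tfr * Var i - Var (nxt n i)) * (f - act_poly (sbar n i) f)))"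
    unfolding T_rel_def by simp
  then show ?thesis
    using V1 V2 C fract_regular_tfr_eval Cf A L1 L2 L CV R1 R2 R RR by simp
qed

lemma balance_identity_ascent:
  fixes a b t U V U' :: "'a :: field"
  assumes "t * a - b \<noteq> 0" and "(a - b) * (V - t * U) = - ((t * a - b) * (U - U'))"
  shows "(1 - (a - b) / (t * a - b) * t) * U + (a - b) / (t * a - b) * V = U'"
proof -
  define p where "p = (a - b) / (t * a - b)"
  have "p * (V - t * U) = U' - U" using assms unfolding p_def by (simp add: field_simps)
  then show ?thesis unfolding p_def[symmetric] by (simp add: algebra_simps)
qed

lemma balance_identity_descent:
  fixes a b t U V U' V' :: "'a :: field"
  assumes D: "t * a - b \<noteq> 0" and "a \<noteq> b"
    and e1: "(a - b) * (U - t * V) = - ((t * a - b) * (V - V'))"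
    and e2: "(b - a) * (U' - t * V') = - ((t * b - a) * (V' - V))"
  shows "(1 - (a - b) / (t * a - b)) * U + (a - b) / (t * a - b) * t * V = U'"
proof -
  define p where "p = (a - b) / (t * a - b)"
  have p: "(t * a - b) * p = a - b" using D unfolding p_def by simp
  \<comment> \<open>eliminate V' between the two exchange relations\<close>
  have "((a - b) * (t * a - b)) * U' = (a - b) * ((t * a - b - (a - b)) * U + (a - b) * t * V)"
    using e1 e2 by algebra
  also have "\<dots> = ((a - b) * (t * a - b)) * ((1 - p) * U + p * t * V)"
    using p by algebra
  finally show ?thesis unfolding p_def[symmetric] using D \<open>a \<noteq> b\<close> by simp
qed

lemma eval_balance_ascent:
  assumes f: "coeffs_regular (of_real t0) f" and g: "coeffs_regular (of_real t0) g"
    and T: "T_rel n i f g" and D: "t0 * y i - y (nxt n i) \<noteq> 0"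
  defines "p \<equiv> (y i - y (nxt n i)) / (t0 * y i - y (nxt n i))"
  shows "of_real (1 - p * t0) * eval_poly t0 y f + of_real p * eval_poly t0 y g
       = eval_poly t0 (act_vec (sbar n i) y) f"
proof -
  have "of_real t0 * of_real (y i) - of_real (y (nxt n i)) \<noteq> (0 :: complex)"
    using D by (metis of_real_diff of_real_eq_0_iff of_real_mult)
  from balance_identity_ascent[OF this eval_T_rel[OF f g T]] show ?thesis
    by (simp add: p_def)
qed

lemma eval_balance_descent:
  assumes f: "coeffs_regular (of_real t0) f" and g: "coeffs_regular (of_real t0) g"
    and T: "T_rel n i g f" and D: "t0 * y i - y (nxt n i) \<noteq> 0"
  defines "p \<equiv> (y i - y (nxt n i)) / (t0 * y i - y (nxt n i))"
  shows "of_real (1 - p) * eval_poly t0 y f + of_real (p * t0) * eval_poly t0 y g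
       = eval_poly t0 (act_vec (sbar n i) y) f"
proof (cases "y i = y (nxt n i)")
  case True
  then show ?thesis by (simp add: p_def act_vec_sbar_eq_self)
next
  case False
  let ?y' = "act_vec (sbar n i) y"
  have "of_real t0 * of_real (y i) - of_real (y (nxt n i)) \<noteq> (0 :: complex)"
    using D by (metis of_real_diff of_real_eq_0_iff of_real_mult)
  moreover have "of_real (y i) \<noteq> (of_real (y (nxt n i)) :: complex)" using False by simp
  moreover note eval_T_rel[OF g f T, of y]
  moreover have "(of_real (y (nxt n i)) - of_real (y i)) * (eval_poly t0 ?y' f - of_real t0 * eval_poly t0 ?y' g)
      = - ((of_real t0 * of_real (y (nxt n i)) - of_real (y i)) *
           (eval_poly t0 ?y' g - eval_poly t0 y g))"
    using eval_T_rel[OF g f T, of ?y'] by simp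
  ultimately have "(1 - of_real p) * eval_poly t0 y f + of_real p * of_real t0 * eval_poly t0 y g
      = eval_poly t0 ?y' f"
    unfolding p_def of_real_divide of_real_diff of_real_mult by (rule balance_identity_descent)
  then show ?thesis by simp
qed

lemma ASEP_family_exchange:
  assumes "is_ASEP_family lam F" "mu \<in> rearrangements lam" "i < length lam"
    "mu ! i < mu ! nxt (length lam) i"
  shows "T_rel (length lam) i (F mu) (F (act_list (length lam) (sbar (length lam) i) mu))"
  using assms unfolding is_ASEP_family_def Let_def by blast

lemma ASEP_family_symmetric:
  assumes "is_ASEP_family lam F" "mu \<in> rearrangements lam" "i < length lam"
    "mu ! i = mu ! nxt (length lam) i"
  shows "act_poly (sbar (length lam) i) (F mu) = F mu"
  using assms unfolding is_ASEP_family_def Let_def by blast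

lemma P_sasep_step_balance:
  fixes lam :: "nat list" and t :: real and chi :: "nat \<Rightarrow> real"
  defines "n \<equiv> length lam"
  assumes F: "is_ASEP_family lam F"
    and reg: "\<forall>nu\<in>rearrangements lam. coeffs_regular (of_real t) (F nu)"
    and sh: "sh permutes {..<n}" and i: "i < n" and up: "dens_up n rho sh i"
    and D: "t * chi (inv sh i) - chi (inv sh (nxt n i)) \<noteq> 0"
    and mu: "mu \<in> rearrangements lam"
  shows "(\<Sum>muh\<in>rearrangements lam. of_real (P_sasep n rho t chi muh sh mu (sbar n i \<circ> sh)) *
            eval_poly t (act_vec sh chi) (F muh))
       = eval_poly t (act_vec (sbar n i \<circ> sh) chi) (F mu) * of_real (1 / real n)"
proof -
  let ?R = "rearrangements lam" and ?E = "\<lambda>nu z. eval_poly t z (F nu)"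
  define y where "y = act_vec sh chi"
  define k where "k = nxt n i"
  define nu where "nu = act_list n (sbar n i) mu"
  define p where "p = pswap t chi (inv sh i) (inv sh k)"
  have len_mu: "length mu = n" using mu by (simp add: n_def rearrangements_length)
  have nu: "nu \<in> ?R" using act_list_sbar_rearrangements[OF mu] i by (simp add: nu_def n_def)
  have nu_nth: "nu ! i = mu ! k" "nu ! k = mu ! i"
    using act_list_sbar_nth[OF i] by (simp_all add: nu_def k_def)
  have D': "t * y i - y k \<noteq> 0" and p_y: "p = (y i - y k) / (t * y i - y k)"
    using D by (simp_all add: y_def k_def p_def pswap_def act_vec_def)
  have "(\<Sum>muh\<in>?R. of_real (P_sasep n rho t chi muh sh mu (sbar n i \<circ> sh)) * ?E muh y)
      = (\<Sum>muh\<in>?R. (if muh = mu then of_real ((1 - p * frate t (mu ! i) (mu ! k)) / real n) * ?E mu y else 0)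
                 + (if muh = nu then of_real (p * frate t (mu ! k) (mu ! i) / real n) * ?E nu y else 0))"
    by (rule sum.cong)
      (use sh i up len_mu in \<open>auto simp: P_sasep_step_swap_form rearrangements_length n_def
                                        p_def k_def nu_def distrib_right\<close>)
  also have "\<dots> = of_real ((1 - p * frate t (mu ! i) (mu ! k)) / real n) * ?E mu y
                 + of_real (p * frate t (mu ! k) (mu ! i) / real n) * ?E nu y"
    using mu nu by (simp add: sum.distrib finite_rearrangements)
  also have "\<dots> = of_real (1 / real n) * (of_real (1 - p * frate t (mu ! i) (mu ! k)) * ?E mu y
                 + of_real (p * frate t (mu ! k) (mu ! i)) * ?E nu y)"
    by (simp add: divide_inverse algebra_simps)
  also have "of_real (1 - p * frate t (mu ! i) (mu ! k)) * ?E mu y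
                 + of_real (p * frate t (mu ! k) (mu ! i)) * ?E nu y = ?E mu (act_vec (sbar n i) y)"
  proof (cases rule: linorder_cases[of "mu ! i" "mu ! k"])
    case less
    have "T_rel n i (F mu) (F nu)"
      using ASEP_family_exchange[OF F mu] i less by (simp add: n_def k_def nu_def)
    with eval_balance_ascent[OF reg[rule_format, OF mu] reg[rule_format, OF nu] _ D'[unfolded k_def]]
    show ?thesis using less by (simp add: frate_def p_y k_def)
  next
    case equal
    have "act_poly (sbar n i) (F mu) = F mu"
      using ASEP_family_symmetric[OF F mu] i equal by (simp add: n_def k_def)
    then have "?E mu (act_vec (sbar n i) y) = ?E mu y"
      using coeffs_regular_act_eval[OF reg[rule_format, OF mu], of "sbar n i" y] by simp
    then show ?thesis using equal by (simp add: frate_def)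
  next
    case greater
    have "T_rel n i (F nu) (F (act_list n (sbar n i) nu))"
      using ASEP_family_exchange[OF F nu] i greater nu_nth by (simp add: n_def k_def)
    moreover have "act_list n (sbar n i) nu = mu"
      using act_list_sbar_involution[OF len_mu i] by (simp add: nu_def)
    ultimately have "T_rel n i (F nu) (F mu)" by simp
    with eval_balance_descent[OF reg[rule_format, OF mu] reg[rule_format, OF nu] _ D'[unfolded k_def]]
    show ?thesis using greater by (simp add: frate_def p_y k_def)
  qed
  also have "act_vec (sbar n i) y = act_vec (sbar n i \<circ> sh) chi"
    using act_vec_comp[OF sh sbar_permutes[OF i], of chi] by (simp add: y_def)
  finally show ?thesis by (simp only: y_def mult.commute)
qed

theorem lemma4p4:
  fixes lam :: "nat list" and m :: nat and rho :: "nat \<Rightarrow> nat"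
    and t :: real and chi :: "nat \<Rightarrow> real"
    and F :: "nat list \<Rightarrow> mpoly"
    and sigma sigmah :: "nat \<Rightarrow> nat" and mu :: "nat list"
  defines "n \<equiv> length lam"
  assumes lam_sorted: "sorted lam"
    and rho: "stone_densities n m rho"
    and t: "0 \<le> t" "t < 1"
    and chi_nz: "\<forall>j<n. chi j \<noteq> 0"
    and chi_p: "\<forall>j<n. \<forall>j'<n. rho j < rho j' \<longrightarrow>
                   t * chi j - chi j' \<noteq> 0 \<and> 0 \<le> pswap t chi j j' \<and> pswap t chi j j' < 1"
    and F: "is_ASEP_family lam F"
    and F_reg: "\<forall>nu\<in>rearrangements lam. \<forall>a. fract_regular (of_real t) (Poly_Mapping.lookup (F nu) a)"
    and sigma: "sigma \<in> Omega n rho" and sigmah: "sigmah \<in> Omega n rho"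
    and pos: "P_tasep n rho sigmah sigma > 0"
    and mu: "mu \<in> rearrangements lam"
  shows "(\<Sum>muh\<in>rearrangements lam.
            of_real (P_sasep n rho t chi muh sigmah mu sigma) *
            eval_poly t (act_vec sigmah chi) (F muh))
         = eval_poly t (act_vec sigma chi) (F mu) * of_real (P_tasep n rho sigmah sigma)"
proof -
  have sh: "sigmah permutes {..<n}" using sigmah by (simp add: Omega_def)
  have reg: "\<forall>nu\<in>rearrangements lam. coeffs_regular (of_real t) (F nu)"
    using F_reg by (simp add: coeffs_regular_def)
  from P_tasep_pos_cases[OF pos] consider "sigma = sigmah"
    | i where "i < n" "dens_up n rho sigmah i" "sigma = sbar n i \<circ> sigmah" by blast
  then show ?thesis
  proof cases
    case 1
    let ?stay = "1 - real (Kcount n rho sigmah) / real n"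
    have "(\<Sum>muh\<in>rearrangements lam. of_real (P_sasep n rho t chi muh sigmah mu sigma) *
            eval_poly t (act_vec sigmah chi) (F muh))
        = (\<Sum>muh\<in>rearrangements lam.
            if muh = mu then of_real ?stay * eval_poly t (act_vec sigmah chi) (F mu) else 0)"
      by (rule sum.cong) (simp_all add: 1 P_sasep_stay[OF sh])
    then show ?thesis
      using mu 1 by (simp add: P_tasep_stay[OF sh] finite_rearrangements mult.commute)
  next
    case (2 i)
    have "inv sigmah i < n" "inv sigmah (nxt n i) < n"
      using permutes_in_image[OF permutes_inv[OF sh]] \<open>i < n\<close> nxt_less by auto
    with chi_p \<open>dens_up n rho sigmah i\<close>
    have "t * chi (inv sigmah i) - chi (inv sigmah (nxt n i)) \<noteq> 0" by (simp add: dens_up_def)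
    from P_sasep_step_balance[OF F reg, folded n_def, OF sh 2(1,2) this mu]
    show ?thesis using P_tasep_step[OF sh 2(1,2)] 2(3) by simp
  qed
qed

end
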